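(* Let $g\in A[z;\sigma]$, let $M=\xi(g)=(m_{ab})$ and put $d_{ab}=\deg m_{ab}$ for $a,b=1,\dots,n$. Then: (1) In each row and in each column of $\mathcal{D}(M)$ the entries different from $-\infty$ are pairwise different; in particular each non-trivial row of $\mathcal{D}(M)$ has a unique maximum. (2) For all $a,b=1,\dots,n$ we have $\xi(g^{(a)}e_b)=E_{aa}ME_{bb}=m_{ab}E_{ab}$ and $\deg(g^{(a)}e_b)=\mathcal{D}(M)_{ab}$. Furthermore $\deg g^{(a)}=\max_{1\le b\le n}\mathcal{D}(M)_{ab}$ for all $a=1,\dots,n$, and $\deg g=\max_{1\le a\le n}\deg g^{(a)}=\max_{1\le a,b\le n}\mathcal{D}(M)_{ab}$. (3) $g$ is semi-reduced if and only if $M$ is semi-reduced. (4) For $a\in\mathrm{Supp}(M)$ let $\delta_a:=\max\{d_{ab}\mid 1\le b\le n\}$ and $b_a:=\max\{b\mid d_{ab}=\delta_a\}$. Then $\max_{1\le b\le n}\mathcal{D}(M)_{ab}=\mathcal{D}(M)_{a,b_a}$. Consequently, $M$ is semi-reduced if and only if the indices $b_a$, $a\in\mathrm{Supp}(M)$, are pairwise different.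
   Context: Let $\mathbb{F}$ be a finite field with $q$ elements and $n\ge 2$ a divisor of $q-1$. Let $A=\mathbb{F}\times\cdots\times\mathbb{F}$ ($n$ copies), with elements written $[a_1,\dots,a_n]$; $\mathbb{F}$ embeds diagonally in $A$. Let $e_i\in A$ be the element with $1$ in position $i$ and $0$ elsewhere. Let $\sigma:A\to A$, $\sigma([a_1,\dots,a_n])=[a_n,a_1,\dots,a_{n-1}]$, so $\sigma(e_i)=e_{i+1}$ for $i<n$ and $\sigma(e_n)=e_1$. The skew polynomial ring $A[z;\sigma]$ consists of the polynomials $\sum_{\nu=0}^N z^\nu a_\nu$ ($a_\nu\in A$, coefficients always written on the right) with coefficientwise addition and multiplication determined by associativity, distributivity and the rule $az=z\sigma(a)$ for $a\in A$. The degree of a nonzero $\sum z^\nu a_\nu$ is the largest $\nu$ with $a_\nu\ne0$; $\deg 0=-\infty$. For $g\in A[z;\sigma]$ and $a=1,\dots,n$ the $a$-th component of $g$ is $g^{(a)}:=e_ag$; the support is $T_g=\{a\mid g^{(a)}\neq 0\}$. Each component has the form $g^{(a)}=\sum_{j=0}^{N_a} z^j c_{a,j}e_{(a+j-1 \bmod n)+1}$ with $c_{a,j}\in\mathbb{F}$, so its leading coefficient is an $\mathbb{F}$-multiple of a primitive idempotent $e_i$. $g$ is called semi-reduced if the leading coefficients of the components $g^{(a)}$, $a\in T_g$, lie in pairwise different ideals $\langle e_i\rangle$ of $A$. Let $\mathcal{M}=\{(m_{ab})\in\mathbb{F}[t]^{n\times n}\mid m_{ab}(0)=0\text{ for }1\le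 b<a\le n\}$. Every $g\in A[z;\sigma]$ can be uniquely written as $g=\sum_{l=0}^N z^{nl}\sum_{i=0}^{n-1}z^i[c^l_{i1},\dots,c^l_{in}]$ with $c^l_{ij}\in\mathbb{F}$; the map $\xi:A[z;\sigma]\to\mathcal{M}$ sends such $g$ to the matrix $(m_{ab})$ with $m_{ab}=\sum_l t^l c^l_{b-a,b}$ if $b\ge a$ and $m_{ab}=\sum_l t^{l+1}c^l_{n+b-a,b}$ if $b<a$; $\xi$ is a ring isomorphism. $E_{ab}\in\mathbb{F}^{n\times n}$ denotes the matrix with $1$ at position $(a,b)$ and $0$ elsewhere. For $M=(m_{ab})\in\mathcal{M}$ with $d_{ab}=\deg m_{ab}$ (with $\deg 0=-\infty$), the degree matrix $\mathcal{D}(M)$ is the $n\times n$ matrix with entries $\mathcal{D}(M)_{ab}=nd_{ab}-a+b\in\mathbb{N}_0\cup\{-\infty\}$. A row of $\mathcal{D}(M)$ is trivial if all its entries are $-\infty$. $M$ is called semi-reduced if the maxima of the non-trivial rows of $\mathcal{D}(M)$ lie in pairwise different columns. $\mathrm{Supp}(M)$ is the set of indices of the nonzero rows of $M$. *)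

theory Defs
  imports "HOL-Computational_Algebra.Polynomial" "HOL-Library.Option_ord"
begin

text \<open>Elements of A = F^n are functions nat => F, positions 1..n
  (value 0 outside). A skew polynomial sum z^nu a_nu is a function
  g :: nat => nat => F with g nu = a_nu. The degree value -infinity is None
  (None is the least element via Option_ord).\<close>

definition skpoly :: "nat \<Rightarrow> (nat \<Rightarrow> nat \<Rightarrow> 'a::zero) \<Rightarrow> bool" where
  "skpoly n g \<longleftrightarrow> (\<forall>\<nu> i. i \<notin> {1..n} \<longrightarrow> g \<nu> i = 0) \<and> finite {\<nu>. \<exists>i. g \<nu> i \<noteq> 0}"

definition Amult :: "(nat \<Rightarrow> 'a::times) \<Rightarrow> (nat \<Rightarrow> 'a) \<Rightarrow> nat \<Rightarrow> 'a" where
  "Amult x y = (\<lambda>i. x i * y i)"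

definition eA :: "nat \<Rightarrow> nat \<Rightarrow> 'a::{zero,one}" where
  "eA i = (\<lambda>j. if j = i then 1 else 0)"

definition Aideal :: "nat \<Rightarrow> (nat \<Rightarrow> 'a::comm_ring_1) \<Rightarrow> (nat \<Rightarrow> 'a) set" where
  "Aideal n x = {Amult x r | r. \<forall>i. i \<notin> {1..n} \<longrightarrow> r i = 0}"

text \<open>sigma([a_1,...,a_n]) = [a_n,a_1,...,a_{n-1}]\<close>
definition sigmaA :: "nat \<Rightarrow> (nat \<Rightarrow> 'a::zero) \<Rightarrow> nat \<Rightarrow> 'a" where
  "sigmaA n x = (\<lambda>i. if 1 \<le> i \<and> i \<le> n then x ((i + n - 2) mod n + 1) else 0)"

text \<open>(sum z^mu f_mu)(sum z^nu g_nu) = sum z^(mu+nu) sigma^nu(f_mu) g_nu\<close>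
definition skmult :: "nat \<Rightarrow> (nat \<Rightarrow> nat \<Rightarrow> 'a::comm_ring_1) \<Rightarrow> (nat \<Rightarrow> nat \<Rightarrow> 'a)
    \<Rightarrow> nat \<Rightarrow> nat \<Rightarrow> 'a" where
  "skmult n f g = (\<lambda>k i. \<Sum>\<nu>\<le>k. ((sigmaA n ^^ \<nu>) (f (k - \<nu>))) i * g \<nu> i)"

definition skconst :: "(nat \<Rightarrow> 'a::zero) \<Rightarrow> nat \<Rightarrow> nat \<Rightarrow> 'a" where
  "skconst c = (\<lambda>\<nu>. if \<nu> = 0 then c else (\<lambda>_. 0))"

definition skdeg :: "(nat \<Rightarrow> nat \<Rightarrow> 'a::zero) \<Rightarrow> nat option" where
  "skdeg g = (if \<forall>\<nu> i. g \<nu> i = 0 then None else Some (Max {\<nu>. \<exists>i. g \<nu> i \<noteq> 0}))"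

definition component :: "nat \<Rightarrow> nat \<Rightarrow> (nat \<Rightarrow> nat \<Rightarrow> 'a::comm_ring_1) \<Rightarrow> nat \<Rightarrow> nat \<Rightarrow> 'a" where
  "component n a g = skmult n (skconst (eA a)) g"

definition skzero :: "nat \<Rightarrow> nat \<Rightarrow> 'a::zero" where
  "skzero = (\<lambda>_ _. 0)"

definition supp_sk :: "nat \<Rightarrow> (nat \<Rightarrow> nat \<Rightarrow> 'a::comm_ring_1) \<Rightarrow> nat set" where
  "supp_sk n g = {a \<in> {1..n}. component n a g \<noteq> skzero}"

definition sklc :: "(nat \<Rightarrow> nat \<Rightarrow> 'a::zero) \<Rightarrow> nat \<Rightarrow> 'a" where
  "sklc g = g (the (skdeg g))"

definition semi_reduced_sk :: "nat \<Rightarrow> (nat \<Rightarrow> nat \<Rightarrow> 'a::comm_ring_1) \<Rightarrow> bool" where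
  "semi_reduced_sk n g \<longleftrightarrow>
     (\<exists>\<iota>. (\<forall>a \<in> supp_sk n g. \<iota> a \<in> {1..n} \<and> sklc (component n a g) \<in> Aideal n (eA (\<iota> a)))
          \<and> inj_on \<iota> (supp_sk n g))"

text \<open>Matrices n x n over F[t], indices 1..n (0 outside).\<close>
definition xi :: "nat \<Rightarrow> (nat \<Rightarrow> nat \<Rightarrow> 'a::zero) \<Rightarrow> nat \<Rightarrow> nat \<Rightarrow> 'a poly" where
  "xi n g = (\<lambda>a b. if a \<in> {1..n} \<and> b \<in> {1..n} then
      Abs_poly (\<lambda>l. if a \<le> b then g (n * l + (b - a)) b
                    else if l = 0 then 0 else g (n * (l - 1) + (n + b - a)) b)
      else 0)"

definition matmul :: "nat \<Rightarrow> (nat \<Rightarrow> nat \<Rightarrow> 'a::comm_semiring_0) \<Rightarrow> (nat \<Rightarrow> nat \<Rightarrow> 'a)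
    \<Rightarrow> nat \<Rightarrow> nat \<Rightarrow> 'a" where
  "matmul n P Q = (\<lambda>i j. \<Sum>k\<in>{1..n}. P i k * Q k j)"

definition Emat :: "nat \<Rightarrow> nat \<Rightarrow> nat \<Rightarrow> nat \<Rightarrow> 'a::{zero,one}" where
  "Emat a b = (\<lambda>i j. if i = a \<and> j = b then 1 else 0)"

definition pdeg :: "'a::zero poly \<Rightarrow> nat option" where
  "pdeg p = (if p = 0 then None else Some (degree p))"

definition Dmat :: "nat \<Rightarrow> (nat \<Rightarrow> nat \<Rightarrow> 'a::zero poly) \<Rightarrow> nat \<Rightarrow> nat \<Rightarrow> nat option" where
  "Dmat n M a b = (if M a b = 0 then None
                   else Some (nat (int n * int (degree (M a b)) - int a + int b)))"

definition nontrivial_row :: "nat \<Rightarrow> (nat \<Rightarrow> nat \<Rightarrow> 'a::zero poly) \<Rightarrow> nat \<Rightarrow> bool" where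
  "nontrivial_row n M a \<longleftrightarrow> (\<exists>b\<in>{1..n}. Dmat n M a b \<noteq> None)"

definition row_max :: "nat \<Rightarrow> (nat \<Rightarrow> nat \<Rightarrow> 'a::zero poly) \<Rightarrow> nat \<Rightarrow> nat option" where
  "row_max n M a = Max ((\<lambda>b. Dmat n M a b) ` {1..n})"

definition semi_reduced_mat :: "nat \<Rightarrow> (nat \<Rightarrow> nat \<Rightarrow> 'a::zero poly) \<Rightarrow> bool" where
  "semi_reduced_mat n M \<longleftrightarrow>
     (\<exists>\<iota>. (\<forall>a \<in> {1..n}. nontrivial_row n M a \<longrightarrow>
              \<iota> a \<in> {1..n} \<and> Dmat n M a (\<iota> a) = row_max n M a)
          \<and> inj_on \<iota> {a \<in> {1..n}. nontrivial_row n M a})"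

definition Supp :: "nat \<Rightarrow> (nat \<Rightarrow> nat \<Rightarrow> 'a::zero poly) \<Rightarrow> nat set" where
  "Supp n M = {a \<in> {1..n}. \<exists>b \<in> {1..n}. M a b \<noteq> 0}"

definition delta_row :: "nat \<Rightarrow> (nat \<Rightarrow> nat \<Rightarrow> 'a::zero poly) \<Rightarrow> nat \<Rightarrow> nat option" where
  "delta_row n M a = Max ((\<lambda>b. pdeg (M a b)) ` {1..n})"

definition b_row :: "nat \<Rightarrow> (nat \<Rightarrow> nat \<Rightarrow> 'a::zero poly) \<Rightarrow> nat \<Rightarrow> nat" where
  "b_row n M a = Max {b \<in> {1..n}. pdeg (M a b) = delta_row n M a}"

end

theory Submission
  imports Defs
begin

text \<open>
  Since e_a z^k = z^k e_c with c = a - 1 + k mod n, the entry m_ab of M = xi(g) collects exactly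
  the coefficients of g at position b of the powers z^k with k = b - a mod n; its coefficient
  of t^l is the one of z^(n l - a + b). Hence every nonzero coefficient of g occurs in exactly
  one entry of M, and a nonzero m_ab contributes exponents up to D(M)_ab = n d_ab - a + b, which
  is congruent to b - a mod n: this separates the finite entries of a row and of a column, and
  it makes deg g, deg g^(a) and deg g^(a) e_b the maxima of D(M) over all entries, over row a
  and at (a, b), because left multiplication by e_a and right multiplication by e_b cut out
  row a and column b. The leading coefficient of g^(a) lives at the single position where row a
  of D(M) attains its maximum, so both notions of semi-reducedness demand that these positions
  be distinct. Within a row, D(M) increases lexicographically in (d_ab, b), which puts the
  maximum at b_a.
\<close>

section \<open>Index arithmetic\<close>

text \<open>The index with e_a z^k = z^k e_(shift_index n a k).\<close>
definition shift_index :: "nat \<Rightarrow> nat \<Rightarrow> nat \<Rightarrow> nat" where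
  "shift_index n a k = (a - 1 + k) mod n + 1"

text \<open>The coefficient of t^l in m_ab is that of z^(xi_exponent n a b l) at position b. The
  truncated subtraction is exact whenever b < a implies 0 < l, the only case in which that
  coefficient can be nonzero.\<close>
definition xi_exponent :: "nat \<Rightarrow> nat \<Rightarrow> nat \<Rightarrow> nat \<Rightarrow> nat" where
  "xi_exponent n a b l = n * l + b - a"

lemma shift_index_in_range: "0 < n \<Longrightarrow> shift_index n a k \<in> {1..n}"
  by (simp add: shift_index_def Suc_le_eq)

lemma shift_index_0: "a \<in> {1..n} \<Longrightarrow> shift_index n a 0 = a"
  by (auto simp: shift_index_def)

lemma shift_index_n: "a \<in> {1..n} \<Longrightarrow> shift_index n a n = a"
  unfolding shift_index_def by (subst mod_add_self2) auto

lemma shift_index_shift_index: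
  "0 < n \<Longrightarrow> shift_index n (shift_index n a k) k' = shift_index n a (k + k')"
  by (simp add: shift_index_def mod_add_left_eq add.assoc)

lemma inj_on_shift_index: "inj_on (\<lambda>a. shift_index n a k) {1..n}"
proof (rule inj_onI)
  have cancel: "x = y" if "x \<le> y" "y < n" "(x + k) mod n = (y + k) mod n" for x y :: nat
  proof (rule ccontr)
    assume "x \<noteq> y"
    moreover have "n dvd y - x" using that mod_eq_dvd_iff_nat[of "x + k" "y + k" n] by simp
    ultimately have "n \<le> y - x" using that(1) by (intro dvd_imp_le) auto
    then show False using that(2) by linarith
  qed
  fix a a' assume a: "a \<in> {1..n}" "a' \<in> {1..n}" and "shift_index n a k = shift_index n a' k"
  moreover define x y where "x = a - 1" and "y = a' - 1"
  ultimately have xy: "(x + k) mod n = (y + k) mod n" "x < n" "y < n"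
    by (auto simp: shift_index_def)
  then have "x = y" using cancel[of x y] cancel[of y x] by (cases "x \<le> y") auto
  then show "a = a'" using a unfolding x_def y_def by (simp; arith)
qed

lemma shift_index_surj:
  assumes "b \<in> {1..n}"
  obtains a where "a \<in> {1..n}" "shift_index n a k = b"
proof -
  have "(\<lambda>a. shift_index n a k) ` {1..n} = {1..n}"
    using assms shift_index_in_range by (intro endo_inj_surj inj_on_shift_index) auto
  then show ?thesis using assms that by (metis imageE)
qed

lemma shift_index_xi_exponent:
  assumes "a \<in> {1..n}" "b \<in> {1..n}" "b < a \<Longrightarrow> 0 < l"
  shows "shift_index n a (xi_exponent n a b l) = b"
proof -
  have "b < a \<Longrightarrow> n \<le> n * l" using assms(3) by simp
  then have "a - 1 + xi_exponent n a b l = (b - 1) + n * l"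
    using assms(1,2) unfolding xi_exponent_def atLeastAtMost_iff by (cases "b < a") arith+
  then have "shift_index n a (xi_exponent n a b l) = (b - 1 + n * l) mod n + 1"
    by (simp only: shift_index_def)
  also have "\<dots> = b" by (subst mod_mult_self2) (use assms(2) in auto)
  finally show ?thesis .
qed

lemma shift_index_eq_imp_xi_exponent:
  assumes "a \<in> {1..n}" "b \<in> {1..n}" "shift_index n a k = b"
  obtains l where "b < a \<Longrightarrow> 0 < l" "k = xi_exponent n a b l"
proof
  define q where "q = (a - 1 + k) div n"
  have k: "a - 1 + k = n * q + (b - 1)"
    using assms(3) mult_div_mod_eq[of n "a - 1 + k"] unfolding q_def shift_index_def by linarith
  then show "k = xi_exponent n a b q" using assms(1,2) unfolding xi_exponent_def by (simp; arith)
  show "0 < q" if "b < a" using k that assms(1,2) by (cases q) auto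
qed

lemma xi_exponent_mono: "l \<le> l' \<Longrightarrow> xi_exponent n a b l \<le> xi_exponent n a b l'"
  by (simp add: xi_exponent_def diff_le_mono)

lemma le_xi_exponent:
  assumes "a \<in> {1..n}" "b \<in> {1..n}" "b < a \<Longrightarrow> 0 < l"
  shows "l \<le> xi_exponent n a b l"
proof -
  have "l \<le> n * l" using assms(1) by simp
  moreover have "b < a \<Longrightarrow> n + (l - 1) \<le> n * l" using assms(1,3) by (cases l) auto
  ultimately show ?thesis
    using assms unfolding xi_exponent_def atLeastAtMost_iff by (cases "b < a") arith+
qed

section \<open>Components of skew polynomials\<close>

lemma sigmaA_power_zero: "(sigmaA n ^^ k) (\<lambda>_. 0) = (\<lambda>_. 0 :: 'a::zero)"
  by (induction k) (auto simp: sigmaA_def)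

lemma sigmaA_eA:
  assumes "c \<in> {1..n}"
  shows "sigmaA n (eA c) = (eA (shift_index n c 1) :: nat \<Rightarrow> 'a::{zero,one})"
proof
  fix i
  have n: "0 < n" using assms by simp
  show "sigmaA n (eA c) i = (eA (shift_index n c 1) :: nat \<Rightarrow> 'a) i"
  proof (cases "i \<in> {1..n}")
    case True
    then have "i + n - 2 = i - 1 + (n - 1)" by simp
    then have "(i + n - 2) mod n + 1 = shift_index n i (n - 1)" by (simp only: shift_index_def)
    moreover have "shift_index n i (n - 1) = c \<longleftrightarrow> i = shift_index n c 1"
      using assms True n shift_index_shift_index shift_index_n by force
    ultimately show ?thesis using True by (auto simp: sigmaA_def eA_def)
  next
    case False
    then show ?thesis using shift_index_in_range[OF n] by (auto simp: sigmaA_def eA_def)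
  qed
qed

lemma sigmaA_power_eA:
  assumes "a \<in> {1..n}"
  shows "(sigmaA n ^^ k) (eA a) = (eA (shift_index n a k) :: nat \<Rightarrow> 'a::{zero,one})"
proof (induction k)
  case 0
  then show ?case using shift_index_0[OF assms] by simp
next
  case (Suc k)
  have n: "0 < n" using assms by simp
  then show ?case
    using Suc sigmaA_eA[OF shift_index_in_range[OF n]] shift_index_shift_index[OF n] by simp
qed

lemma component_apply:
  assumes "a \<in> {1..n}"
  shows "component n a g k i = (if i = shift_index n a k then g k i else 0)"
proof -
  have "component n a g k i = (\<Sum>\<nu>\<le>k. if \<nu> = k then (sigmaA n ^^ k) (eA a) i * g k i else 0)"
    unfolding component_def skmult_def skconst_def by (rule sum.cong) (auto simp: sigmaA_power_zero)
  then show ?thesis by (simp only: sigmaA_power_eA[OF assms]) (simp add: eA_def)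
qed

lemma skmult_skconst_right: "skmult n f (skconst c) k i = f k i * c i"
proof -
  have "skmult n f (skconst c) k i = (\<Sum>\<nu>\<le>k. if \<nu> = 0 then f k i * c i else 0)"
    unfolding skmult_def skconst_def by (rule sum.cong) auto
  then show ?thesis by simp
qed

lemma skpoly_supp_subset:
  assumes "skpoly n g" "\<And>k i. g k i = 0 \<Longrightarrow> h k i = 0"
  shows "skpoly n h"
proof -
  have "{k. \<exists>i. h k i \<noteq> 0} \<subseteq> {k. \<exists>i. g k i \<noteq> 0}" using assms(2) by blast
  then show ?thesis using assms finite_subset unfolding skpoly_def by metis
qed

lemma skpoly_component:
  assumes "skpoly n g" "a \<in> {1..n}"
  shows "skpoly n (component n a g)"
  by (rule skpoly_supp_subset[OF assms(1)]) (auto simp: component_apply[OF assms(2)])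

lemma skpoly_mult_eA: "skpoly n g \<Longrightarrow> skpoly n (skmult n g (skconst (eA b)))"
  by (erule skpoly_supp_subset) (simp add: skmult_skconst_right)

section \<open>The matrix of a skew polynomial\<close>

lemma coeff_xi:
  assumes "skpoly n h" "a \<in> {1..n}" "b \<in> {1..n}"
  shows "coeff (xi n h a b) l = (if b < a \<and> l = 0 then 0 else h (xi_exponent n a b l) b)"
proof -
  let ?c = "\<lambda>l. if b < a \<and> l = 0 then 0 else h (xi_exponent n a b l) b"
  have "(\<lambda>l. if a \<le> b then h (n * l + (b - a)) b
              else if l = 0 then 0 else h (n * (l - 1) + (n + b - a)) b) = ?c"
  proof
    fix l
    have "b < a \<Longrightarrow> 0 < l \<Longrightarrow> n * (l - 1) + (n + b - a) = n * l + b - a"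
      using assms(2) by (cases l) auto
    then show "(if a \<le> b then h (n * l + (b - a)) b
               else if l = 0 then 0 else h (n * (l - 1) + (n + b - a)) b) = ?c l"
      by (auto simp: xi_exponent_def)
  qed
  then have "xi n h a b = Abs_poly ?c" using assms(2,3) by (simp add: xi_def)
  moreover obtain N where N: "{k. \<exists>i. h k i \<noteq> 0} \<subseteq> {..<N}"
    using assms(1) finite_nat_bounded unfolding skpoly_def by blast
  have "\<forall>\<^sub>\<infinity> l. ?c l = 0"
    unfolding MOST_nat
  proof (intro exI allI impI)
    fix l assume "N < l"
    then show "?c l = 0" using N le_xi_exponent[OF assms(2,3), of l] by fastforce
  qed
  ultimately show ?thesis by (simp add: Abs_poly_inverse)
qed

lemma xi_mask:
  assumes "skpoly n h" "skpoly n h'"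
    and "\<And>i j l. i \<in> {1..n} \<Longrightarrow> j \<in> {1..n} \<Longrightarrow> (j < i \<Longrightarrow> 0 < l) \<Longrightarrow>
           h' (xi_exponent n i j l) j = (if P i j then h (xi_exponent n i j l) j else 0)"
  shows "xi n h' = (\<lambda>i j. if P i j then xi n h i j else 0)"
proof (intro ext)
  fix i j
  show "xi n h' i j = (if P i j then xi n h i j else 0)"
  proof (cases "i \<in> {1..n} \<and> j \<in> {1..n}")
    case True
    show ?thesis
    proof (rule poly_eqI)
      fix l
      show "coeff (xi n h' i j) l = coeff (if P i j then xi n h i j else 0) l"
        using True assms(3)[of i j l] by (auto simp: coeff_xi[OF assms(1)] coeff_xi[OF assms(2)])
    qed
  qed (auto simp: xi_def)
qed

lemma xi_component:
  assumes "skpoly n h" "a \<in> {1..n}"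
  shows "xi n (component n a h) = (\<lambda>i j. if i = a then xi n h i j else 0)"
proof (rule xi_mask[OF assms(1) skpoly_component[OF assms]])
  fix i j and l :: nat
  assume ij: "i \<in> {1..n}" "j \<in> {1..n}" and l: "j < i \<Longrightarrow> 0 < l"
  let ?k = "xi_exponent n i j l"
  have "j = shift_index n a ?k \<longleftrightarrow> shift_index n i ?k = shift_index n a ?k"
    using shift_index_xi_exponent[OF ij l] by simp
  also have "\<dots> \<longleftrightarrow> i = a"
    using inj_on_shift_index[of n ?k] ij(1) assms(2) unfolding inj_on_def by blast
  finally show "component n a h ?k j = (if i = a then h ?k j else 0)"
    by (simp add: component_apply[OF assms(2)])
qed

lemma xi_mult_eA:
  assumes "skpoly n h"
  shows "xi n (skmult n h (skconst (eA b))) = (\<lambda>i j. if j = b then xi n h i j else 0)"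
  by (rule xi_mask[OF assms skpoly_mult_eA[OF assms]]) (simp add: skmult_skconst_right eA_def)

lemma matmul_Emat_left:
  fixes X :: "nat \<Rightarrow> nat \<Rightarrow> 'b::comm_semiring_1"
  assumes "a \<in> {1..n}"
  shows "matmul n (Emat a a) X i j = (if i = a then X a j else 0)"
proof -
  have "matmul n (Emat a a) X i j = (\<Sum>k\<in>{1..n}. if k = a then (if i = a then X k j else 0) else 0)"
    unfolding matmul_def Emat_def by (rule sum.cong) auto
  then show ?thesis using assms by simp
qed

lemma matmul_Emat_right:
  fixes X :: "nat \<Rightarrow> nat \<Rightarrow> 'b::comm_semiring_1"
  assumes "b \<in> {1..n}"
  shows "matmul n X (Emat b b) i j = (if j = b then X i b else 0)"
proof -
  have "matmul n X (Emat b b) i j = (\<Sum>k\<in>{1..n}. if k = b then (if j = b then X i k else 0) else 0)"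
    unfolding matmul_def Emat_def by (rule sum.cong) auto
  then show ?thesis using assms by simp
qed

lemma matmul_Emat_Emat:
  fixes M :: "nat \<Rightarrow> nat \<Rightarrow> 'b::comm_semiring_1"
  assumes "a \<in> {1..n}" "b \<in> {1..n}"
  shows "matmul n (Emat a a) (matmul n M (Emat b b)) = (\<lambda>i j. M a b * Emat a b i j)"
  unfolding fun_eq_iff matmul_Emat_left[OF assms(1)] matmul_Emat_right[OF assms(2)]
  by (simp add: Emat_def)

section \<open>Degree matrices\<close>

lemma Dmat_eq_xi_exponent:
  "Dmat n M a b = (if M a b = 0 then None else Some (xi_exponent n a b (degree (M a b))))"
proof -
  have "nat (int (n * d) - int a + int b) = n * d + b - a" for d
    by arith
  then show ?thesis by (simp add: Dmat_def xi_exponent_def)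
qed

lemma Dmat_mask:
  "Dmat n (\<lambda>i j. if P i j then M i j else 0) = (\<lambda>i j. if P i j then Dmat n M i j else None)"
  by (simp add: Dmat_def fun_eq_iff)

lemma Dmat_mono_in_row:
  assumes "M a b \<noteq> 0" "M a b' \<noteq> 0" "b \<le> n" "1 \<le> b'"
    and "degree (M a b) < degree (M a b') \<or> degree (M a b) = degree (M a b') \<and> b \<le> b'"
  shows "Dmat n M a b \<le> Dmat n M a b'"
proof -
  let ?d = "degree (M a b)" and ?d' = "degree (M a b')"
  have "?d < ?d' \<Longrightarrow> n * Suc ?d \<le> n * ?d'" by (intro mult_le_mono2) simp
  then have "n * ?d + b \<le> n * ?d' + b'" using assms(3-5) by auto
  then show ?thesis using assms(1,2) by (simp add: Dmat_eq_xi_exponent xi_exponent_def)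
qed

lemma row_max_attained:
  assumes "0 < n"
  obtains b where "b \<in> {1..n}" "Dmat n M a b = row_max n M a"
proof -
  have "row_max n M a \<in> (\<lambda>b. Dmat n M a b) ` {1..n}"
    unfolding row_max_def using assms by (intro Max_in) auto
  then show ?thesis using that by auto
qed

lemma row_max_eq_None_iff:
  assumes "0 < n"
  shows "row_max n M a = None \<longleftrightarrow> \<not> nontrivial_row n M a"
proof -
  have "row_max n M a \<le> None \<longleftrightarrow> (\<forall>b\<in>{1..n}. Dmat n M a b \<le> None)"
    unfolding row_max_def using assms by (simp add: Max_le_iff)
  then show ?thesis by (auto simp: nontrivial_row_def dest: less_eq_option_None_is_None)
qed

lemma Supp_eq_nontrivial_rows: "Supp n M = {a \<in> {1..n}. nontrivial_row n M a}"
  by (auto simp: Supp_def nontrivial_row_def Dmat_def)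

lemma b_row_maximizes_row:
  assumes "a \<in> Supp n M"
  shows "b_row n M a \<in> {1..n}" "Dmat n M a (b_row n M a) = row_max n M a"
proof -
  define \<delta> where "\<delta> = delta_row n M a"
  define T where "T = {b \<in> {1..n}. pdeg (M a b) = \<delta>}"
  obtain b0 where b0: "b0 \<in> {1..n}" "M a b0 \<noteq> 0" using assms by (auto simp: Supp_def)
  then have "\<delta> \<in> (\<lambda>b. pdeg (M a b)) ` {1..n}" unfolding \<delta>_def delta_row_def by (intro Max_in) auto
  then have "T \<noteq> {}" unfolding T_def by auto
  then have br: "b_row n M a \<in> T" unfolding b_row_def T_def \<delta>_def[symmetric] by (intro Max_in) auto
  have le_\<delta>: "pdeg (M a b) \<le> \<delta>" if "b \<in> {1..n}" for b
    unfolding \<delta>_def delta_row_def using that by (intro Max_ge) auto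
  have "\<delta> \<noteq> None" using le_\<delta>[OF b0(1)] b0(2) by (cases \<delta>) (auto simp: pdeg_def)
  then have nz: "M a (b_row n M a) \<noteq> 0" using br by (auto simp: T_def pdeg_def)
  show "b_row n M a \<in> {1..n}" using br by (simp add: T_def)
  have "Dmat n M a b \<le> Dmat n M a (b_row n M a)" if b: "b \<in> {1..n}" for b
  proof (cases "M a b = 0")
    case False
    have "pdeg (M a b) \<le> pdeg (M a (b_row n M a))" using le_\<delta>[OF b] br by (simp add: T_def)
    then have "degree (M a b) \<le> degree (M a (b_row n M a))" using False nz by (simp add: pdeg_def)
    moreover have "degree (M a b) = degree (M a (b_row n M a)) \<Longrightarrow> b \<le> b_row n M a"
      using br b False nz unfolding b_row_def T_def \<delta>_def[symmetric] by (intro Max_ge) (auto simp: pdeg_def)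
    ultimately show ?thesis
      using b br False nz by (intro Dmat_mono_in_row) (auto simp: T_def)
  qed (simp add: Dmat_def)
  then show "Dmat n M a (b_row n M a) = row_max n M a"
    unfolding row_max_def using br by (intro Max_eqI[symmetric]) (auto simp: T_def)
qed

section \<open>Degrees of skew polynomials\<close>

lemma order_eq_by_upper_bounds:
  fixes p q :: "'a::linorder"
  assumes "\<And>x. p \<le> x \<longleftrightarrow> q \<le> x"
  shows "p = q"
  using assms[of p] assms[of q] by auto

lemma Max_mask_row:
  fixes f :: "'b \<Rightarrow> 'c \<Rightarrow> 'd::linorder option"
  assumes "finite A" "finite B" "a \<in> A" "B \<noteq> {}"
  shows "Max ((\<lambda>(i, j). if i = a then f i j else None) ` (A \<times> B)) = Max (f a ` B)"
    (is "Max ?lhs = ?rhs")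
proof (rule order_eq_by_upper_bounds)
  have "A \<times> B \<noteq> {}" using assms by blast
  then show "Max ?lhs \<le> x \<longleftrightarrow> ?rhs \<le> x" for x
    using assms by (auto simp: Max_le_iff)
qed

lemma Max_mask_entry:
  fixes f :: "'b \<Rightarrow> 'c \<Rightarrow> 'd::linorder option"
  assumes "finite A" "finite B" "a \<in> A" "b \<in> B"
  shows "Max ((\<lambda>(i, j). if i = a \<and> j = b then f i j else None) ` (A \<times> B)) = f a b"
    (is "Max ?lhs = ?rhs")
proof (rule order_eq_by_upper_bounds)
  have "A \<times> B \<noteq> {}" using assms by blast
  then show "Max ?lhs \<le> x \<longleftrightarrow> ?rhs \<le> x" for x
    using assms by (auto simp: Max_le_iff)
qed

lemma Max_Max_eq_Max_pairs:
  fixes f :: "'b \<Rightarrow> 'c \<Rightarrow> 'd::linorder"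
  assumes "finite A" "A \<noteq> {}" "finite B" "B \<noteq> {}"
  shows "Max ((\<lambda>a. Max (f a ` B)) ` A) = Max ((\<lambda>(a, b). f a b) ` (A \<times> B))"
  by (rule order_eq_by_upper_bounds) (use assms in \<open>simp add: Max_le_iff\<close>)

lemma degree_xi_pos:
  assumes "skpoly n h" "a \<in> {1..n}" "b \<in> {1..n}" "b < a" "xi n h a b \<noteq> 0"
  shows "0 < degree (xi n h a b)"
proof (rule ccontr)
  assume "\<not> 0 < degree (xi n h a b)"
  then have "coeff (xi n h a b) 0 \<noteq> 0" using leading_coeff_neq_0[OF assms(5)] by simp
  then show False using coeff_xi[OF assms(1-3)] assms(4) by simp
qed

lemma Dmat_xi_SomeD:
  assumes "skpoly n h" "a \<in> {1..n}" "b \<in> {1..n}" "Dmat n (xi n h) a b = Some k"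
  shows "shift_index n a k = b" "h k b \<noteq> 0"
proof -
  let ?d = "degree (xi n h a b)"
  have nz: "xi n h a b \<noteq> 0" and k: "k = xi_exponent n a b ?d"
    using assms(4) by (auto simp: Dmat_eq_xi_exponent split: if_splits)
  have d: "b < a \<Longrightarrow> 0 < ?d" using degree_xi_pos[OF assms(1-3) _ nz] .
  show "shift_index n a k = b" using shift_index_xi_exponent[OF assms(2,3) d] k by simp
  have "coeff (xi n h a b) ?d = h k b" using coeff_xi[OF assms(1-3), of ?d] d k by auto
  then show "h k b \<noteq> 0" using leading_coeff_neq_0[OF nz] by simp
qed

lemma le_Dmat_xi:
  assumes "skpoly n h" "h k i \<noteq> 0"
  obtains a where "a \<in> {1..n}" "i \<in> {1..n}" "Some k \<le> Dmat n (xi n h) a i"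
proof -
  have i: "i \<in> {1..n}" using assms unfolding skpoly_def by blast
  obtain a where a: "a \<in> {1..n}" "shift_index n a k = i" using shift_index_surj[OF i] .
  obtain l where l: "i < a \<Longrightarrow> 0 < l" "k = xi_exponent n a i l"
    using shift_index_eq_imp_xi_exponent[OF a(1) i a(2)] by blast
  have "coeff (xi n h a i) l \<noteq> 0" using coeff_xi[OF assms(1) a(1) i, of l] l assms(2) by auto
  then have "xi n h a i \<noteq> 0" "l \<le> degree (xi n h a i)" by (auto intro: le_degree)
  then have "Some k \<le> Dmat n (xi n h) a i"
    using l xi_exponent_mono by (simp add: Dmat_eq_xi_exponent)
  then show ?thesis using that a(1) i by blast
qed

lemma skdeg_le_iff:
  assumes "finite {k. \<exists>i. h k i \<noteq> 0}"
  shows "skdeg h \<le> x \<longleftrightarrow> (\<forall>k i. h k i \<noteq> 0 \<longrightarrow> Some k \<le> x)"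
  using assms by (cases x) (auto simp: skdeg_def Max_le_iff)

lemma skdeg_eq_Max_Dmat:
  assumes "skpoly n h" "0 < n"
  shows "skdeg h = Max ((\<lambda>(a, b). Dmat n (xi n h) a b) ` ({1..n} \<times> {1..n}))"
proof (rule order_eq_by_upper_bounds)
  fix x
  have "(\<forall>k i. h k i \<noteq> 0 \<longrightarrow> Some k \<le> x) \<longleftrightarrow> (\<forall>a\<in>{1..n}. \<forall>b\<in>{1..n}. Dmat n (xi n h) a b \<le> x)"
  proof safe
    fix a b assume x: "\<forall>k i. h k i \<noteq> 0 \<longrightarrow> Some k \<le> x" and ab: "a \<in> {1..n}" "b \<in> {1..n}"
    show "Dmat n (xi n h) a b \<le> x"
    proof (cases "Dmat n (xi n h) a b")
      case (Some k)
      then show ?thesis using x Dmat_xi_SomeD(2)[OF assms(1) ab Some] by simp blast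
    qed simp
  next
    fix k i assume "\<forall>a\<in>{1..n}. \<forall>b\<in>{1..n}. Dmat n (xi n h) a b \<le> x" "h k i \<noteq> 0"
    then show "Some k \<le> x" using le_Dmat_xi[OF assms(1)] order_trans by metis
  qed
  then show "skdeg h \<le> x \<longleftrightarrow> Max ((\<lambda>(a, b). Dmat n (xi n h) a b) ` ({1..n} \<times> {1..n})) \<le> x"
    using assms by (simp add: skdeg_le_iff skpoly_def Max_le_iff)
qed

lemma Dmat_xi_distinct_in_row:
  assumes "skpoly n g" "a \<in> {1..n}" "b \<in> {1..n}" "b' \<in> {1..n}" "b \<noteq> b'"
    and "Dmat n (xi n g) a b \<noteq> None"
  shows "Dmat n (xi n g) a b \<noteq> Dmat n (xi n g) a b'"
proof
  assume eq: "Dmat n (xi n g) a b = Dmat n (xi n g) a b'"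
  obtain k where k: "Dmat n (xi n g) a b = Some k" using assms(6) by blast
  then have k': "Dmat n (xi n g) a b' = Some k" using eq by simp
  show False
    using Dmat_xi_SomeD(1)[OF assms(1,2,3) k] Dmat_xi_SomeD(1)[OF assms(1,2,4) k'] assms(5) by simp
qed

lemma Dmat_xi_distinct_in_column:
  assumes "skpoly n g" "a \<in> {1..n}" "a' \<in> {1..n}" "b \<in> {1..n}" "a \<noteq> a'"
    and "Dmat n (xi n g) a b \<noteq> None"
  shows "Dmat n (xi n g) a b \<noteq> Dmat n (xi n g) a' b"
proof
  assume eq: "Dmat n (xi n g) a b = Dmat n (xi n g) a' b"
  obtain k where k: "Dmat n (xi n g) a b = Some k" using assms(6) by blast
  have "shift_index n a k = shift_index n a' k"
    using Dmat_xi_SomeD(1)[OF assms(1,2,4) k] Dmat_xi_SomeD(1)[OF assms(1,3,4)] eq k by simp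
  then show False using inj_on_shift_index[of n k] assms(2,3,5) unfolding inj_on_def by blast
qed

lemma Dmat_xi_unique_row_max:
  assumes "skpoly n g" "a \<in> {1..n}" "nontrivial_row n (xi n g) a"
  shows "\<exists>!b. b \<in> {1..n} \<and> Dmat n (xi n g) a b = row_max n (xi n g) a"
proof -
  have n: "0 < n" using assms(2) by simp
  obtain b where b: "b \<in> {1..n}" "Dmat n (xi n g) a b = row_max n (xi n g) a"
    using row_max_attained[OF n] .
  moreover have "row_max n (xi n g) a \<noteq> None" using row_max_eq_None_iff[OF n] assms(3) by blast
  ultimately show ?thesis using Dmat_xi_distinct_in_row[OF assms(1,2)] by metis
qed

lemma xi_component_mult_eA:
  assumes "skpoly n g" "a \<in> {1..n}"
  shows "xi n (skmult n (component n a g) (skconst (eA b)))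
           = (\<lambda>i j. if i = a \<and> j = b then xi n g i j else 0)"
  by (simp add: xi_mult_eA[OF skpoly_component[OF assms]] xi_component[OF assms] fun_eq_iff)

lemma xi_component_mult_eA_eq_matmul:
  assumes "skpoly n g" "a \<in> {1..n}" "b \<in> {1..n}"
  shows "xi n (skmult n (component n a g) (skconst (eA b)))
           = matmul n (Emat a a) (matmul n (xi n g) (Emat b b))"
  unfolding xi_component_mult_eA[OF assms(1,2)] matmul_Emat_Emat[OF assms(2,3)]
  by (simp add: Emat_def fun_eq_iff)

lemma skdeg_component_mult_eA:
  assumes "skpoly n g" "a \<in> {1..n}" "b \<in> {1..n}"
  shows "skdeg (skmult n (component n a g) (skconst (eA b))) = Dmat n (xi n g) a b"
proof -
  have n: "0 < n" using assms(2) by simp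
  have "skdeg (skmult n (component n a g) (skconst (eA b)))
      = Max ((\<lambda>(i, j). Dmat n (xi n (skmult n (component n a g) (skconst (eA b)))) i j) ` ({1..n} \<times> {1..n}))"
    by (rule skdeg_eq_Max_Dmat[OF skpoly_mult_eA[OF skpoly_component[OF assms(1,2)]] n])
  also have "\<dots> = Max ((\<lambda>(i, j). if i = a \<and> j = b then Dmat n (xi n g) i j else None) ` ({1..n} \<times> {1..n}))"
    by (simp only: xi_component_mult_eA[OF assms(1,2)] Dmat_mask)
  also have "\<dots> = Dmat n (xi n g) a b" by (rule Max_mask_entry) (use assms in auto)
  finally show ?thesis .
qed

lemma skdeg_component:
  assumes "skpoly n g" "a \<in> {1..n}"
  shows "skdeg (component n a g) = row_max n (xi n g) a"
proof -
  have n: "0 < n" using assms(2) by simp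
  have "skdeg (component n a g)
      = Max ((\<lambda>(i, j). Dmat n (xi n (component n a g)) i j) ` ({1..n} \<times> {1..n}))"
    by (rule skdeg_eq_Max_Dmat[OF skpoly_component[OF assms] n])
  also have "\<dots> = Max ((\<lambda>(i, j). if i = a then Dmat n (xi n g) i j else None) ` ({1..n} \<times> {1..n}))"
    by (simp only: xi_component[OF assms] Dmat_mask)
  also have "\<dots> = row_max n (xi n g) a"
    unfolding row_max_def by (rule Max_mask_row) (use assms in auto)
  finally show ?thesis .
qed

lemma Max_skdeg_component_eq_Max_Dmat:
  assumes "skpoly n g" "0 < n"
  shows "Max ((\<lambda>a. skdeg (component n a g)) ` {1..n})
           = Max ((\<lambda>(a, b). Dmat n (xi n g) a b) ` ({1..n} \<times> {1..n}))"
proof -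
  have "(\<lambda>a. skdeg (component n a g)) ` {1..n} = (\<lambda>a. Max (Dmat n (xi n g) a ` {1..n})) ` {1..n}"
    using skdeg_component[OF assms(1)] unfolding row_max_def by (intro image_cong) auto
  then show ?thesis using assms(2) by (simp add: Max_Max_eq_Max_pairs)
qed

section \<open>Semi-reducedness\<close>

lemma single_entry_in_Aideal_iff:
  fixes x :: "nat \<Rightarrow> 'a::comm_ring_1"
  assumes "c \<in> {1..n}" "x c \<noteq> 0" "\<And>i. i \<noteq> c \<Longrightarrow> x i = 0"
  shows "x \<in> Aideal n (eA j) \<longleftrightarrow> j = c"
proof
  assume "x \<in> Aideal n (eA j)"
  then obtain r where "x = Amult (eA j) r" by (auto simp: Aideal_def)
  then have "x c = eA j c * r c" by (simp add: Amult_def)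
  then show "j = c" using assms(2) by (auto simp: eA_def split: if_splits)
next
  assume "j = c"
  then have "x = Amult (eA j) x" using assms(3) by (auto simp: Amult_def eA_def)
  moreover have "\<forall>i. i \<notin> {1..n} \<longrightarrow> x i = 0" using assms(1,3) by auto
  ultimately show "x \<in> Aideal n (eA j)" unfolding Aideal_def by blast
qed

lemma ex_inj_selection_iff:
  assumes "\<And>a. a \<in> S \<Longrightarrow> \<exists>!b. b \<in> B \<and> P a b" "\<And>a. a \<in> S \<Longrightarrow> f a \<in> B \<and> P a (f a)"
  shows "(\<exists>\<iota>. (\<forall>a\<in>S. \<iota> a \<in> B \<and> P a (\<iota> a)) \<and> inj_on \<iota> S) \<longleftrightarrow> inj_on f S"
proof
  assume "\<exists>\<iota>. (\<forall>a\<in>S. \<iota> a \<in> B \<and> P a (\<iota> a)) \<and> inj_on \<iota> S"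
  then obtain \<iota> where \<iota>: "\<forall>a\<in>S. \<iota> a \<in> B \<and> P a (\<iota> a)" "inj_on \<iota> S" by blast
  have "\<forall>a\<in>S. \<iota> a = f a" using assms \<iota>(1) by metis
  then show "inj_on f S" using \<iota>(2) inj_on_cong by metis
qed (use assms(2) in blast)

lemma supp_sk_eq_Supp_xi:
  assumes "skpoly n g"
  shows "supp_sk n g = Supp n (xi n g)"
proof -
  have "component n a g \<noteq> skzero \<longleftrightarrow> nontrivial_row n (xi n g) a" if a: "a \<in> {1..n}" for a
  proof -
    have "component n a g \<noteq> skzero \<longleftrightarrow> skdeg (component n a g) \<noteq> None"
      by (auto simp: skdeg_def skzero_def fun_eq_iff)
    moreover have "0 < n" using a by simp
    ultimately show ?thesis
      using skdeg_component[OF assms a] row_max_eq_None_iff[of n "xi n g" a] by simp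
  qed
  then show ?thesis unfolding supp_sk_def Supp_eq_nontrivial_rows by auto
qed

lemma sklc_component_in_Aideal_iff:
  assumes "skpoly n g" "a \<in> Supp n (xi n g)" "j \<in> {1..n}"
  shows "sklc (component n a g) \<in> Aideal n (eA j) \<longleftrightarrow> Dmat n (xi n g) a j = row_max n (xi n g) a"
proof -
  have a: "a \<in> {1..n}" "nontrivial_row n (xi n g) a"
    using assms(2) by (auto simp: Supp_eq_nontrivial_rows)
  then have n: "0 < n" by simp
  obtain k where k: "row_max n (xi n g) a = Some k"
    using row_max_eq_None_iff[OF n] a(2) by blast
  obtain c where c: "c \<in> {1..n}" "Dmat n (xi n g) a c = Some k"
    using row_max_attained[OF n, of "xi n g" a] k by metis
  have lc: "sklc (component n a g) = (\<lambda>i. if i = c then g k i else 0)"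
    using skdeg_component[OF assms(1) a(1)] k Dmat_xi_SomeD(1)[OF assms(1) a(1) c]
    by (simp add: sklc_def component_apply[OF a(1)] fun_eq_iff)
  have "sklc (component n a g) \<in> Aideal n (eA j) \<longleftrightarrow> j = c"
    unfolding lc using Dmat_xi_SomeD(2)[OF assms(1) a(1) c] c(1)
    by (intro single_entry_in_Aideal_iff) auto
  also have "\<dots> \<longleftrightarrow> Dmat n (xi n g) a j = row_max n (xi n g) a"
    using c k Dmat_xi_SomeD(1)[OF assms(1) a(1) c(1)] Dmat_xi_SomeD(1)[OF assms(1) a(1) assms(3)]
    by auto
  finally show ?thesis .
qed

lemma semi_reduced_mat_xi_iff:
  assumes "skpoly n g"
  shows "semi_reduced_mat n (xi n g) \<longleftrightarrow> inj_on (b_row n (xi n g)) (Supp n (xi n g))"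
proof -
  have "semi_reduced_mat n (xi n g) \<longleftrightarrow> (\<exists>\<iota>. (\<forall>a\<in>Supp n (xi n g).
          \<iota> a \<in> {1..n} \<and> Dmat n (xi n g) a (\<iota> a) = row_max n (xi n g) a) \<and> inj_on \<iota> (Supp n (xi n g)))"
    unfolding semi_reduced_mat_def Supp_eq_nontrivial_rows by blast
  also have "\<dots> \<longleftrightarrow> inj_on (b_row n (xi n g)) (Supp n (xi n g))"
  proof (rule ex_inj_selection_iff)
    fix a assume a: "a \<in> Supp n (xi n g)"
    then show "\<exists>!b. b \<in> {1..n} \<and> Dmat n (xi n g) a b = row_max n (xi n g) a"
      using Dmat_xi_unique_row_max[OF assms] by (simp add: Supp_eq_nontrivial_rows)
    show "b_row n (xi n g) a \<in> {1..n} \<and> Dmat n (xi n g) a (b_row n (xi n g) a) = row_max n (xi n g) a"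
      using b_row_maximizes_row[OF a] by simp
  qed
  finally show ?thesis .
qed

lemma semi_reduced_sk_iff:
  assumes "skpoly n g"
  shows "semi_reduced_sk n g \<longleftrightarrow> inj_on (b_row n (xi n g)) (Supp n (xi n g))"
  unfolding semi_reduced_sk_def supp_sk_eq_Supp_xi[OF assms]
proof (rule ex_inj_selection_iff)
  fix a assume a: "a \<in> Supp n (xi n g)"
  then have "\<exists>!b. b \<in> {1..n} \<and> Dmat n (xi n g) a b = row_max n (xi n g) a"
    using Dmat_xi_unique_row_max[OF assms] by (simp add: Supp_eq_nontrivial_rows)
  moreover have "b \<in> {1..n} \<and> sklc (component n a g) \<in> Aideal n (eA b) \<longleftrightarrow>
      b \<in> {1..n} \<and> Dmat n (xi n g) a b = row_max n (xi n g) a" for b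
    using sklc_component_in_Aideal_iff[OF assms a] by blast
  ultimately show "\<exists>!b. b \<in> {1..n} \<and> sklc (component n a g) \<in> Aideal n (eA b)" by simp
  show "b_row n (xi n g) a \<in> {1..n} \<and>
      sklc (component n a g) \<in> Aideal n (eA (b_row n (xi n g) a))"
    using b_row_maximizes_row[OF a] sklc_component_in_Aideal_iff[OF assms a] by simp
qed

theorem proposition3p10:
  fixes n :: nat and g :: "nat \<Rightarrow> nat \<Rightarrow> 'a::{field,finite}"
  assumes "n \<ge> 2" and "n dvd card (UNIV :: 'a set) - 1" and "skpoly n g"
  defines "M \<equiv> xi n g"
  shows
  \<comment> \<open>(1)\<close>
    "(\<forall>a\<in>{1..n}. \<forall>b\<in>{1..n}. \<forall>b'\<in>{1..n}. b \<noteq> b' \<longrightarrow> Dmat n M a b \<noteq> None \<longrightarrow>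
        Dmat n M a b \<noteq> Dmat n M a b')
   \<and> (\<forall>b\<in>{1..n}. \<forall>a\<in>{1..n}. \<forall>a'\<in>{1..n}. a \<noteq> a' \<longrightarrow> Dmat n M a b \<noteq> None \<longrightarrow>
        Dmat n M a b \<noteq> Dmat n M a' b)
   \<and> (\<forall>a\<in>{1..n}. nontrivial_row n M a \<longrightarrow>
        (\<exists>!b. b \<in> {1..n} \<and> Dmat n M a b = row_max n M a))
  \<comment> \<open>(2)\<close>
   \<and> (\<forall>a\<in>{1..n}. \<forall>b\<in>{1..n}.
        xi n (skmult n (component n a g) (skconst (eA b))) = matmul n (Emat a a) (matmul n M (Emat b b))
      \<and> matmul n (Emat a a) (matmul n M (Emat b b)) = (\<lambda>i j. M a b * Emat a b i j)
      \<and> skdeg (skmult n (component n a g) (skconst (eA b))) = Dmat n M a b)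
   \<and> (\<forall>a\<in>{1..n}. skdeg (component n a g) = row_max n M a)
   \<and> skdeg g = Max ((\<lambda>a. skdeg (component n a g)) ` {1..n})
   \<and> Max ((\<lambda>a. skdeg (component n a g)) ` {1..n}) = Max ((\<lambda>(a, b). Dmat n M a b) ` ({1..n} \<times> {1..n}))
  \<comment> \<open>(3)\<close>
   \<and> (semi_reduced_sk n g \<longleftrightarrow> semi_reduced_mat n M)
  \<comment> \<open>(4)\<close>
   \<and> (\<forall>a\<in>Supp n M. row_max n M a = Dmat n M a (b_row n M a))
   \<and> (semi_reduced_mat n M \<longleftrightarrow> inj_on (b_row n M) (Supp n M))"
  unfolding M_def
proof (intro conjI)
  have g: "skpoly n g" and n: "0 < n" using assms(1,3) by auto
  show "\<forall>a\<in>{1..n}. \<forall>b\<in>{1..n}. \<forall>b'\<in>{1..n}. b \<noteq> b' \<longrightarrow> Dmat n (xi n g) a b \<noteq> None \<longrightarrow>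
      Dmat n (xi n g) a b \<noteq> Dmat n (xi n g) a b'"
    using Dmat_xi_distinct_in_row[OF g] by blast
  show "\<forall>b\<in>{1..n}. \<forall>a\<in>{1..n}. \<forall>a'\<in>{1..n}. a \<noteq> a' \<longrightarrow> Dmat n (xi n g) a b \<noteq> None \<longrightarrow>
      Dmat n (xi n g) a b \<noteq> Dmat n (xi n g) a' b"
    using Dmat_xi_distinct_in_column[OF g] by blast
  show "\<forall>a\<in>{1..n}. nontrivial_row n (xi n g) a \<longrightarrow>
      (\<exists>!b. b \<in> {1..n} \<and> Dmat n (xi n g) a b = row_max n (xi n g) a)"
    using Dmat_xi_unique_row_max[OF g] by blast
  show "\<forall>a\<in>{1..n}. \<forall>b\<in>{1..n}.
      xi n (skmult n (component n a g) (skconst (eA b))) = matmul n (Emat a a) (matmul n (xi n g) (Emat b b))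
    \<and> matmul n (Emat a a) (matmul n (xi n g) (Emat b b)) = (\<lambda>i j. xi n g a b * Emat a b i j)
    \<and> skdeg (skmult n (component n a g) (skconst (eA b))) = Dmat n (xi n g) a b"
    using xi_component_mult_eA_eq_matmul[OF g] matmul_Emat_Emat skdeg_component_mult_eA[OF g]
    by blast
  show "\<forall>a\<in>{1..n}. skdeg (component n a g) = row_max n (xi n g) a"
    using skdeg_component[OF g] by blast
  show "Max ((\<lambda>a. skdeg (component n a g)) ` {1..n})
      = Max ((\<lambda>(a, b). Dmat n (xi n g) a b) ` ({1..n} \<times> {1..n}))"
    by (rule Max_skdeg_component_eq_Max_Dmat[OF g n])
  then show "skdeg g = Max ((\<lambda>a. skdeg (component n a g)) ` {1..n})"
    using skdeg_eq_Max_Dmat[OF g n] by simp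
  show "semi_reduced_sk n g \<longleftrightarrow> semi_reduced_mat n (xi n g)"
    using semi_reduced_sk_iff[OF g] semi_reduced_mat_xi_iff[OF g] by simp
  show "\<forall>a\<in>Supp n (xi n g). row_max n (xi n g) a = Dmat n (xi n g) a (b_row n (xi n g) a)"
    using b_row_maximizes_row(2) by metis
  show "semi_reduced_mat n (xi n g) \<longleftrightarrow> inj_on (b_row n (xi n g)) (Supp n (xi n g))"
    by (rule semi_reduced_mat_xi_iff[OF g])
qed

end
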